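(* Let $\models$ be an intersective mixed consequence truth-relation on a finite set $V$ of truth values (constant expressive setting). Then $\models$ admits a G-conditional iff every minimal representation $\models_{\mathcal{D}_p^1,\mathcal{D}_c^1}\cap\dots\cap\models_{\mathcal{D}_p^K,\mathcal{D}_c^K}$ of it satisfies the following, where the list of sets of designated values is $\mathcal{D}_p^1,\mathcal{D}_c^1,\dots,\mathcal{D}_p^K,\mathcal{D}_c^K$: (DC1) for each set $\mathcal{D}_i$ in the list, either some truth value belongs to $\mathcal{D}_i$ and to no other set in the list, or $\mathcal{D}_i$ is included in another, distinct set of the list; (DC2) for every non-empty sublist $\mathcal{D}'_1,\dots,\mathcal{D}'_{n'}$ there is $x\in V$ such that for every set $\mathcal{D}_i$ of the list: $x\in\mathcal{D}_i$ iff $\exists i'$ with $\mathcal{D}'_{i'}\subseteq\mathcal{D}_i$; (N1) for $i\neq j$ there is no inclusion $\mathcal{D}_p^i\subseteq\mathcal{D}_p^j$ nor $\mathcal{D}_c^i\subseteq\mathcal{D}_c^j$; (N2) for all $i,j$: if $\mathcal{D}_p^i\subseteq\mathcal{D}_c^j$ then $\mathcal{D}_p^j\subseteq\mathcal{D}_c^i$, and if $\mathcal{D}_c^j\subseteq\mathcal{D}_p^i$ then $\mathcal{D}_c^i\subseteq\mathcal{D}_p^j$.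
   Context: $V$ contains distinct $1,0$; sets of designated values: $\mathcal{D}\subseteq V$, $1\in\mathcal{D}$, $0\notin\mathcal{D}$. $\gamma\models_{\mathcal{D}_p,\mathcal{D}_c}\delta$ iff ($\gamma\subseteq\mathcal{D}_p\Rightarrow\delta\cap\mathcal{D}_c\neq\emptyset$). An intersective mixed truth-relation is a finite intersection of such; a representation is a list of mixed relations whose intersection it is, minimal if of least possible length. Semantics: valuations mapping atoms to $V$, connectives interpreted by fixed truth functions, extended compositionally, every assignment to finitely many distinct atoms realized; constant expressive: every value is the constant value of some formula. $\Gamma\vdash\Delta$ iff $v(\Gamma)\models v(\Delta)$ for all $v$. A G-conditional is a binary connective $\to$ (interpreted by some truth function) with, for all $\Gamma,\Delta,A,B$: $\Gamma\vdash\{A\to B\}\cup\Delta$ iff $\Gamma\cup\{A\}\vdash\{B\}\cup\Delta$; and $\Gamma\cup\{A\to B\}\vdash\Delta$ iff ($\Gamma\vdash\{A\}\cup\Delta$ and $\Gamma\cup\{B\}\vdash\Delta$). *)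

theory Defs
  imports Main
begin

text \<open>Truth values: a finite type 'v (so V = UNIV is finite). Designated sets contain
  the value one and not the value zero.\<close>

definition designated :: "'v \<Rightarrow> 'v \<Rightarrow> 'v set \<Rightarrow> bool" where
  "designated one zero D \<longleftrightarrow> one \<in> D \<and> zero \<notin> D"

definition mixed_rel :: "'v set \<Rightarrow> 'v set \<Rightarrow> 'v set \<Rightarrow> 'v set \<Rightarrow> bool" where
  "mixed_rel Dp Dc \<gamma> \<delta> \<longleftrightarrow> (\<gamma> \<subseteq> Dp \<longrightarrow> \<delta> \<inter> Dc \<noteq> {})"

definition inter_rel :: "('v set \<times> 'v set) list \<Rightarrow> 'v set \<Rightarrow> 'v set \<Rightarrow> bool" where
  "inter_rel L \<gamma> \<delta> \<longleftrightarrow> (\<forall>p\<in>set L. mixed_rel (fst p) (snd p) \<gamma> \<delta>)"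

definition representation :: "'v \<Rightarrow> 'v \<Rightarrow> ('v set \<Rightarrow> 'v set \<Rightarrow> bool) \<Rightarrow> ('v set \<times> 'v set) list \<Rightarrow> bool" where
  "representation one zero R L \<longleftrightarrow>
     L \<noteq> [] \<and> (\<forall>p\<in>set L. designated one zero (fst p) \<and> designated one zero (snd p)) \<and>
     R = inter_rel L"

definition intersective_mixed :: "'v \<Rightarrow> 'v \<Rightarrow> ('v set \<Rightarrow> 'v set \<Rightarrow> bool) \<Rightarrow> bool" where
  "intersective_mixed one zero R \<longleftrightarrow> (\<exists>L. representation one zero R L)"

definition minimal_representation :: "'v \<Rightarrow> 'v \<Rightarrow> ('v set \<Rightarrow> 'v set \<Rightarrow> bool) \<Rightarrow> ('v set \<times> 'v set) list \<Rightarrow> bool" where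
  "minimal_representation one zero R L \<longleftrightarrow>
     representation one zero R L \<and>
     (\<forall>L'. representation one zero R L' \<longrightarrow> length L \<le> length L')"

definition flat_list :: "('v set \<times> 'v set) list \<Rightarrow> 'v set list" where
  "flat_list L = concat (map (\<lambda>p. [fst p, snd p]) L)"

definition DC1 :: "('v set \<times> 'v set) list \<Rightarrow> bool" where
  "DC1 L \<longleftrightarrow> (\<forall>D\<in>set (flat_list L).
      (\<exists>x\<in>D. \<forall>D'\<in>set (flat_list L). D' \<noteq> D \<longrightarrow> x \<notin> D')
    \<or> (\<exists>D'\<in>set (flat_list L). D' \<noteq> D \<and> D \<subseteq> D'))"

definition DC2 :: "('v set \<times> 'v set) list \<Rightarrow> bool" where
  "DC2 L \<longleftrightarrow> (\<forall>S. S \<noteq> {} \<and> S \<subseteq> set (flat_list L) \<longrightarrow>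
      (\<exists>x. \<forall>D\<in>set (flat_list L). x \<in> D \<longleftrightarrow> (\<exists>D'\<in>S. D' \<subseteq> D)))"

definition N1 :: "('v set \<times> 'v set) list \<Rightarrow> bool" where
  "N1 L \<longleftrightarrow> (\<forall>i<length L. \<forall>j<length L. i \<noteq> j \<longrightarrow>
      \<not> fst (L ! i) \<subseteq> fst (L ! j) \<and> \<not> snd (L ! i) \<subseteq> snd (L ! j))"

definition N2 :: "('v set \<times> 'v set) list \<Rightarrow> bool" where
  "N2 L \<longleftrightarrow> (\<forall>i<length L. \<forall>j<length L.
      (fst (L ! i) \<subseteq> snd (L ! j) \<longrightarrow> fst (L ! j) \<subseteq> snd (L ! i)) \<and>
      (snd (L ! j) \<subseteq> fst (L ! i) \<longrightarrow> snd (L ! i) \<subseteq> fst (L ! j)))"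

text \<open>Formulas: atoms, arbitrary further connectives (symbols of type 'c, interpreted by
  truth functions on argument lists), and the binary connective Imp.\<close>
datatype 'c form = Atom nat | Op 'c "'c form list" | Imp "'c form" "'c form"

fun eval :: "('c \<Rightarrow> 'v list \<Rightarrow> 'v) \<Rightarrow> ('v \<Rightarrow> 'v \<Rightarrow> 'v) \<Rightarrow> (nat \<Rightarrow> 'v) \<Rightarrow> 'c form \<Rightarrow> 'v" where
  "eval I f v (Atom n) = v n"
| "eval I f v (Op c xs) = I c (map (eval I f v) xs)"
| "eval I f v (Imp a b) = f (eval I f v a) (eval I f v b)"

fun imp_free :: "'c form \<Rightarrow> bool" where
  "imp_free (Atom n) = True"
| "imp_free (Op c xs) = (\<forall>x\<in>set xs. imp_free x)"
| "imp_free (Imp a b) = False"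

definition constant_expressive :: "('c \<Rightarrow> 'v list \<Rightarrow> 'v) \<Rightarrow> bool" where
  "constant_expressive I \<longleftrightarrow>
     (\<forall>x::'v. \<exists>\<phi>. imp_free \<phi> \<and> (\<forall>f v. eval I f v \<phi> = x))"

definition entails :: "('v set \<Rightarrow> 'v set \<Rightarrow> bool) \<Rightarrow> ('c \<Rightarrow> 'v list \<Rightarrow> 'v) \<Rightarrow> ('v \<Rightarrow> 'v \<Rightarrow> 'v)
    \<Rightarrow> 'c form set \<Rightarrow> 'c form set \<Rightarrow> bool" where
  "entails R I f \<Gamma> \<Delta> \<longleftrightarrow> (\<forall>v. R (eval I f v ` \<Gamma>) (eval I f v ` \<Delta>))"

definition G_conditional :: "('v set \<Rightarrow> 'v set \<Rightarrow> bool) \<Rightarrow> ('c \<Rightarrow> 'v list \<Rightarrow> 'v) \<Rightarrow> ('v \<Rightarrow> 'v \<Rightarrow> 'v) \<Rightarrow> bool" where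
  "G_conditional R I f \<longleftrightarrow> (\<forall>\<Gamma> \<Delta> A B.
     (entails R I f \<Gamma> ({Imp A B} \<union> \<Delta>) \<longleftrightarrow> entails R I f (\<Gamma> \<union> {A}) ({B} \<union> \<Delta>)) \<and>
     (entails R I f (\<Gamma> \<union> {Imp A B}) \<Delta> \<longleftrightarrow>
        (entails R I f \<Gamma> ({A} \<union> \<Delta>) \<and> entails R I f (\<Gamma> \<union> {B}) \<Delta>)))"

definition admits_G_conditional :: "('v set \<Rightarrow> 'v set \<Rightarrow> bool) \<Rightarrow> ('c \<Rightarrow> 'v list \<Rightarrow> 'v) \<Rightarrow> bool" where
  "admits_G_conditional R I \<longleftrightarrow> (\<exists>f. G_conditional R I f)"

end

theory Submission
  imports Defs
begin

(* By constant expressivity, f is a G-conditional iff each value c = f a b obeys the two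
   G-rules on sets of truth values.  In a minimal representation no component (Dp, Dc) is
   dominated by another, so the only counterexample to the relation lying above (Dp, V - Dc)
   is that pair itself, and the rules split componentwise: c is in Dp iff a is not in Dc or
   b is in Dp, and c is in Dc iff a is not in Dp or b is in Dc.

   Taking b = 0 gives a negation that swaps the two sides of every component.  It yields N1
   and N2, and it makes the membership patterns realised by truth values closed under finite
   conjunctions and disjunctions; together with the patterns of 1 and 0 this gives DC2, and
   DC1 is its singleton case.  Conversely, N1 and N2 make the pattern required of a -> b
   upward closed among the designated sets, and DC2 realises every such pattern. *)

lemma set_flat_list: "set (flat_list L) = fst ` set L \<union> snd ` set L"
  unfolding flat_list_def by auto

lemma ball_flat_list:
  "(\<forall>D\<in>set (flat_list L). P D) \<longleftrightarrow> (\<forall>p\<in>set L. P (fst p) \<and> P (snd p))"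
  unfolding set_flat_list by blast

lemma representation_rel_iff:
  assumes "representation one zero R L"
  shows "R \<gamma> \<delta> \<longleftrightarrow> (\<forall>p\<in>set L. \<gamma> \<subseteq> fst p \<longrightarrow> \<delta> \<inter> snd p \<noteq> {})"
  using assms unfolding representation_def inter_rel_def mixed_rel_def by auto

lemma representation_designated:
  assumes "representation one zero R L" and "p \<in> set L"
  shows "one \<in> fst p" "one \<in> snd p" "zero \<notin> fst p" "zero \<notin> snd p"
  using assms unfolding representation_def designated_def by auto

lemma representation_dominated_sublist:
  assumes rep: "representation one zero R L"
    and "L' \<noteq> []" and sub: "set L' \<subseteq> set L"
    and dom: "\<And>p. p \<in> set L \<Longrightarrow> \<exists>q\<in>set L'. fst p \<subseteq> fst q \<and> snd q \<subseteq> snd p"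
  shows "representation one zero R L'"
proof -
  have "inter_rel L \<gamma> \<delta> \<longleftrightarrow> inter_rel L' \<gamma> \<delta>" for \<gamma> \<delta>
  proof
    assume "inter_rel L \<gamma> \<delta>"
    then show "inter_rel L' \<gamma> \<delta>"
      using sub unfolding inter_rel_def by blast
  next
    assume L': "inter_rel L' \<gamma> \<delta>"
    show "inter_rel L \<gamma> \<delta>"
      unfolding inter_rel_def
    proof
      fix p assume "p \<in> set L"
      then obtain q where "q \<in> set L'" "fst p \<subseteq> fst q" "snd q \<subseteq> snd p"
        using dom by blast
      then show "mixed_rel (fst p) (snd p) \<gamma> \<delta>"
        using L' unfolding inter_rel_def mixed_rel_def by blast
    qed
  qed
  then show ?thesis
    using assms unfolding representation_def by (auto simp: fun_eq_iff)
qed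

lemma minimal_representation_imp_representation:
  "minimal_representation one zero R L \<Longrightarrow> representation one zero R L"
  unfolding minimal_representation_def by simp

lemma intersective_mixed_imp_ex_minimal_representation:
  assumes "intersective_mixed one zero R"
  shows "\<exists>L. minimal_representation one zero R L"
  using assms ex_has_least_nat[of "representation one zero R" _ length]
  unfolding intersective_mixed_def minimal_representation_def by blast

lemma minimal_representation_distinct:
  assumes min: "minimal_representation one zero R L"
  shows "distinct L"
proof (rule ccontr)
  assume "\<not> distinct L"
  then have "length (remdups L) < length L"
    using card_distinct card_length length_remdups_card_conv le_neq_implies_less by metis
  moreover have "representation one zero R (remdups L)"
  proof (rule representation_dominated_sublist)
    show "representation one zero R L"
      using min by (rule minimal_representation_imp_representation)
    then show "remdups L \<noteq> []"
      unfolding representation_def by simp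
  qed auto
  ultimately show False
    using min unfolding minimal_representation_def by (meson leD)
qed

lemma minimal_representation_antichain:
  assumes min: "minimal_representation one zero R L"
    and "p \<in> set L" "q \<in> set L" "fst p \<subseteq> fst q" "snd q \<subseteq> snd p"
  shows "p = q"
proof (rule ccontr)
  assume "p \<noteq> q"
  have "representation one zero R (removeAll p L)"
  proof (rule representation_dominated_sublist)
    show "representation one zero R L"
      using min by (rule minimal_representation_imp_representation)
    show "removeAll p L \<noteq> []"
      using \<open>p \<noteq> q\<close> \<open>q \<in> set L\<close> by (metis Diff_iff empty_iff empty_set set_removeAll singletonD)
  qed (use assms \<open>p \<noteq> q\<close> in auto)
  moreover have "length (removeAll p L) < length L"
    using \<open>p \<in> set L\<close> by (rule length_removeAll_less)
  ultimately show False
    using min unfolding minimal_representation_def by (meson leD)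
qed

lemma minimal_representation_not_rel_iff:
  assumes min: "minimal_representation one zero R L" and p: "p \<in> set L"
    and "fst p \<subseteq> \<gamma>" and "- snd p \<subseteq> \<delta>"
  shows "\<not> R \<gamma> \<delta> \<longleftrightarrow> \<gamma> = fst p \<and> \<delta> = - snd p"
proof -
  have rep: "representation one zero R L"
    using min by (rule minimal_representation_imp_representation)
  have "q = p" if "q \<in> set L" "\<gamma> \<subseteq> fst q" "\<delta> \<inter> snd q = {}" for q
    using minimal_representation_antichain[OF min p that(1)] that assms(3,4) by blast
  then have "\<not> R \<gamma> \<delta> \<longleftrightarrow> \<gamma> \<subseteq> fst p \<and> \<delta> \<inter> snd p = {}"
    using p unfolding representation_rel_iff[OF rep] by blast
  then show ?thesis
    using assms(3,4) by (auto simp: disjoint_eq_subset_Compl)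
qed

definition conditional_value :: "('v set \<Rightarrow> 'v set \<Rightarrow> bool) \<Rightarrow> 'v \<Rightarrow> 'v \<Rightarrow> 'v \<Rightarrow> bool" where
  "conditional_value R a b c \<longleftrightarrow> (\<forall>\<gamma> \<delta>.
     (R \<gamma> (insert c \<delta>) \<longleftrightarrow> R (insert a \<gamma>) (insert b \<delta>)) \<and>
     (R (insert c \<gamma>) \<delta> \<longleftrightarrow> R \<gamma> (insert a \<delta>) \<and> R (insert b \<gamma>) \<delta>))"

definition pairwise_conditional :: "('v set \<times> 'v set) list \<Rightarrow> 'v \<Rightarrow> 'v \<Rightarrow> 'v \<Rightarrow> bool" where
  "pairwise_conditional L a b c \<longleftrightarrow> (\<forall>p\<in>set L.
     (c \<in> fst p \<longleftrightarrow> a \<notin> snd p \<or> b \<in> fst p) \<and> (c \<in> snd p \<longleftrightarrow> a \<notin> fst p \<or> b \<in> snd p))"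

lemma G_conditional_iff_conditional_value:
  assumes "constant_expressive I"
  shows "G_conditional R I f \<longleftrightarrow> (\<forall>a b. conditional_value R a b (f a b))"
proof
  obtain \<kappa> where \<kappa>: "\<And>x f v. eval I f v (\<kappa> x) = x"
    using assms unfolding constant_expressive_def by metis
  have eval_\<kappa>: "eval I f v ` \<kappa> ` A = A" for v A
    using \<kappa> by (simp add: image_image)
  assume G: "G_conditional R I f"
  show "\<forall>a b. conditional_value R a b (f a b)"
    unfolding conditional_value_def
  proof (intro allI)
    fix a b \<gamma> \<delta>
    have "eval I f v (Imp (\<kappa> a) (\<kappa> b)) = f a b" for v
      using \<kappa> by simp
    then show "(R \<gamma> (insert (f a b) \<delta>) \<longleftrightarrow> R (insert a \<gamma>) (insert b \<delta>)) \<and>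
      (R (insert (f a b) \<gamma>) \<delta> \<longleftrightarrow> R \<gamma> (insert a \<delta>) \<and> R (insert b \<gamma>) \<delta>)"
      using G[unfolded G_conditional_def, rule_format, of "\<kappa> ` \<gamma>" "\<kappa> a" "\<kappa> b" "\<kappa> ` \<delta>"]
      unfolding entails_def by (simp add: image_Un eval_\<kappa> \<kappa>)
  qed
next
  assume "\<forall>a b. conditional_value R a b (f a b)"
  then show "G_conditional R I f"
    unfolding G_conditional_def entails_def conditional_value_def
    by (simp add: image_Un all_conj_distrib)
qed

lemma pairwise_conditional_imp_conditional_value:
  assumes "representation one zero R L" and "pairwise_conditional L a b c"
  shows "conditional_value R a b c"
  using assms(2) unfolding conditional_value_def pairwise_conditional_def
    representation_rel_iff[OF assms(1)] by blast

lemma conditional_value_imp_pairwise_conditional: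
  assumes min: "minimal_representation one zero R L" and "conditional_value R a b c"
  shows "pairwise_conditional L a b c"
  unfolding pairwise_conditional_def
proof
  fix p assume p: "p \<in> set L"
  note refutes = minimal_representation_not_rel_iff[OF min p]
  have "R (fst p) (insert c (- snd p)) \<longleftrightarrow> R (insert a (fst p)) (insert b (- snd p))"
    and "R (insert c (fst p)) (- snd p) \<longleftrightarrow>
      R (fst p) (insert a (- snd p)) \<and> R (insert b (fst p)) (- snd p)"
    using assms(2) unfolding conditional_value_def by simp_all
  moreover have "\<not> R (fst p) (insert c (- snd p)) \<longleftrightarrow> c \<notin> snd p"
    and "\<not> R (insert a (fst p)) (insert b (- snd p)) \<longleftrightarrow> a \<in> fst p \<and> b \<notin> snd p"
    and "\<not> R (insert c (fst p)) (- snd p) \<longleftrightarrow> c \<in> fst p"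
    and "\<not> R (fst p) (insert a (- snd p)) \<longleftrightarrow> a \<notin> snd p"
    and "\<not> R (insert b (fst p)) (- snd p) \<longleftrightarrow> b \<in> fst p"
    by (simp_all add: refutes subset_insertI2 set_eq_subset insert_subset)
  ultimately show "(c \<in> fst p \<longleftrightarrow> a \<notin> snd p \<or> b \<in> fst p) \<and>
      (c \<in> snd p \<longleftrightarrow> a \<notin> fst p \<or> b \<in> snd p)"
    by argo
qed

definition admits_pairwise_conditional :: "('v set \<times> 'v set) list \<Rightarrow> bool" where
  "admits_pairwise_conditional L \<longleftrightarrow> (\<forall>a b. \<exists>c. pairwise_conditional L a b c)"

lemma admits_G_conditional_iff_admits_pairwise_conditional:
  assumes ce: "constant_expressive I" and min: "minimal_representation one zero R L"
  shows "admits_G_conditional R I \<longleftrightarrow> admits_pairwise_conditional L"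
proof
  assume "admits_G_conditional R I"
  then obtain f where "\<forall>a b. conditional_value R a b (f a b)"
    unfolding admits_G_conditional_def G_conditional_iff_conditional_value[OF ce] by blast
  then show "admits_pairwise_conditional L"
    unfolding admits_pairwise_conditional_def
    using conditional_value_imp_pairwise_conditional[OF min] by blast
next
  have rep: "representation one zero R L"
    using min by (rule minimal_representation_imp_representation)
  assume "admits_pairwise_conditional L"
  then obtain f where "\<forall>a b. pairwise_conditional L a b (f a b)"
    unfolding admits_pairwise_conditional_def by metis
  then have "G_conditional R I f"
    unfolding G_conditional_iff_conditional_value[OF ce]
    using pairwise_conditional_imp_conditional_value[OF rep] by blast
  then show "admits_G_conditional R I"
    unfolding admits_G_conditional_def by blast
qed

lemma N1_iff_distinct_antichain:
  "N1 L \<longleftrightarrow> distinct L \<and> (\<forall>p\<in>set L. \<forall>q\<in>set L. p \<noteq> q \<longrightarrow> \<not> fst p \<subseteq> fst q \<and> \<not> snd p \<subseteq> snd q)"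
    (is "_ \<longleftrightarrow> _ \<and> ?antichain")
proof
  assume N1: "N1 L"
  have "distinct L"
    unfolding distinct_conv_nth
  proof (intro allI impI)
    fix i j assume "i < length L" "j < length L" "i \<noteq> j"
    then have "\<not> fst (L ! i) \<subseteq> fst (L ! j)"
      using N1 unfolding N1_def by blast
    then show "L ! i \<noteq> L ! j"
      by auto
  qed
  moreover have ?antichain
  proof (intro ballI impI)
    fix p q assume "p \<in> set L" "q \<in> set L" "p \<noteq> q"
    then obtain i j where "i < length L" "j < length L" "i \<noteq> j" "p = L ! i" "q = L ! j"
      by (metis in_set_conv_nth)
    then show "\<not> fst p \<subseteq> fst q \<and> \<not> snd p \<subseteq> snd q"
      using N1 unfolding N1_def by blast
  qed
  ultimately show "distinct L \<and> ?antichain" ..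
next
  assume "distinct L \<and> ?antichain"
  then show "N1 L"
    unfolding N1_def using nth_eq_iff_index_eq nth_mem by blast
qed

lemma N1_antichainD:
  assumes "N1 L" and "p \<in> set L" and "q \<in> set L" and "fst p \<subseteq> fst q \<or> snd p \<subseteq> snd q"
  shows "p = q"
  using assms unfolding N1_iff_distinct_antichain by metis

lemma N2_iff:
  "N2 L \<longleftrightarrow> (\<forall>p\<in>set L. \<forall>q\<in>set L.
     (fst p \<subseteq> snd q \<longrightarrow> fst q \<subseteq> snd p) \<and> (snd q \<subseteq> fst p \<longrightarrow> snd p \<subseteq> fst q))"
  by (simp add: N2_def all_set_conv_all_nth)

lemma N2D:
  assumes "N2 L" and "p \<in> set L" and "q \<in> set L"
  shows "fst p \<subseteq> snd q \<Longrightarrow> fst q \<subseteq> snd p" and "snd q \<subseteq> fst p \<Longrightarrow> snd p \<subseteq> fst q"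
  using assms unfolding N2_iff by simp_all

definition realizable :: "('v set \<times> 'v set) list \<Rightarrow> ('v set \<Rightarrow> bool) \<Rightarrow> bool" where
  "realizable L P \<longleftrightarrow> (\<exists>x. \<forall>D\<in>set (flat_list L). x \<in> D \<longleftrightarrow> P D)"

lemma realizable_iff:
  "realizable L P \<longleftrightarrow> (\<exists>x. \<forall>p\<in>set L. (x \<in> fst p \<longleftrightarrow> P (fst p)) \<and> (x \<in> snd p \<longleftrightarrow> P (snd p)))"
  unfolding realizable_def ball_flat_list ..

lemma pairwise_conditional_zero:
  assumes "representation one zero R L" and "pairwise_conditional L a zero c" and "p \<in> set L"
  shows "c \<in> fst p \<longleftrightarrow> a \<notin> snd p" and "c \<in> snd p \<longleftrightarrow> a \<notin> fst p"
  using assms representation_designated[OF assms(1,3)] unfolding pairwise_conditional_def by auto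

context
  fixes one zero :: 'v and R and L :: "('v set \<times> 'v set) list"
  assumes rep: "representation one zero R L"
    and closed: "admits_pairwise_conditional L"
begin

lemma exists_pairwise_negation:
  obtains n where "\<And>p. p \<in> set L \<Longrightarrow> n \<in> fst p \<longleftrightarrow> a \<notin> snd p"
    and "\<And>p. p \<in> set L \<Longrightarrow> n \<in> snd p \<longleftrightarrow> a \<notin> fst p"
proof -
  obtain c where "pairwise_conditional L a zero c"
    using closed unfolding admits_pairwise_conditional_def by blast
  from pairwise_conditional_zero[OF rep this] show thesis
    by (rule that)
qed

lemma realizable_disj:
  assumes "realizable L P" and "realizable L Q"
  shows "realizable L (\<lambda>D. P D \<or> Q D)"
proof -
  obtain x y where
    x: "\<forall>p\<in>set L. (x \<in> fst p \<longleftrightarrow> P (fst p)) \<and> (x \<in> snd p \<longleftrightarrow> P (snd p))" and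
    y: "\<forall>p\<in>set L. (y \<in> fst p \<longleftrightarrow> Q (fst p)) \<and> (y \<in> snd p \<longleftrightarrow> Q (snd p))"
    using assms unfolding realizable_iff by blast
  obtain n where
    n: "\<And>p. p \<in> set L \<Longrightarrow> n \<in> fst p \<longleftrightarrow> x \<notin> snd p"
       "\<And>p. p \<in> set L \<Longrightarrow> n \<in> snd p \<longleftrightarrow> x \<notin> fst p"
    using exists_pairwise_negation[of x] by blast
  obtain c where c: "pairwise_conditional L n y c"
    using closed unfolding admits_pairwise_conditional_def by blast
  show ?thesis
    unfolding realizable_iff
  proof (intro exI ballI)
    fix p assume p: "p \<in> set L"
    show "(c \<in> fst p \<longleftrightarrow> P (fst p) \<or> Q (fst p)) \<and> (c \<in> snd p \<longleftrightarrow> P (snd p) \<or> Q (snd p))"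
      using c p n[OF p] x y unfolding pairwise_conditional_def by auto
  qed
qed

lemma realizable_conj:
  assumes "realizable L P" and "realizable L Q"
  shows "realizable L (\<lambda>D. P D \<and> Q D)"
proof -
  obtain x y where
    x: "\<forall>p\<in>set L. (x \<in> fst p \<longleftrightarrow> P (fst p)) \<and> (x \<in> snd p \<longleftrightarrow> P (snd p))" and
    y: "\<forall>p\<in>set L. (y \<in> fst p \<longleftrightarrow> Q (fst p)) \<and> (y \<in> snd p \<longleftrightarrow> Q (snd p))"
    using assms unfolding realizable_iff by blast
  obtain m where
    m: "\<And>p. p \<in> set L \<Longrightarrow> m \<in> fst p \<longleftrightarrow> y \<notin> snd p"
       "\<And>p. p \<in> set L \<Longrightarrow> m \<in> snd p \<longleftrightarrow> y \<notin> fst p"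
    using exists_pairwise_negation[of y] by blast
  obtain c where c: "pairwise_conditional L x m c"
    using closed unfolding admits_pairwise_conditional_def by blast
  \<comment> \<open>d is not (x \<rightarrow> not y)\<close>
  obtain d where
    d: "\<And>p. p \<in> set L \<Longrightarrow> d \<in> fst p \<longleftrightarrow> c \<notin> snd p"
       "\<And>p. p \<in> set L \<Longrightarrow> d \<in> snd p \<longleftrightarrow> c \<notin> fst p"
    using exists_pairwise_negation[of c] by blast
  show ?thesis
    unfolding realizable_iff
  proof (intro exI ballI)
    fix p assume p: "p \<in> set L"
    show "(d \<in> fst p \<longleftrightarrow> P (fst p) \<and> Q (fst p)) \<and> (d \<in> snd p \<longleftrightarrow> P (snd p) \<and> Q (snd p))"
      using c p m[OF p] d[OF p] x y unfolding pairwise_conditional_def by auto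
  qed
qed

lemma realizable_subset:
  assumes "finite A"
  shows "realizable L (\<lambda>D. A \<subseteq> D)"
  using assms
proof (induction A rule: finite_induct)
  case empty
  show ?case
    unfolding realizable_iff using representation_designated(1,2)[OF rep] by (auto intro!: exI[of _ one])
next
  case (insert a A)
  have "realizable L (\<lambda>D. a \<in> D)"
    unfolding realizable_def by blast
  from realizable_conj[OF this insert.IH] show ?case
    by simp
qed

lemma realizable_Bex:
  assumes "finite S" and "\<And>D'. D' \<in> S \<Longrightarrow> realizable L (P D')"
  shows "realizable L (\<lambda>D. \<exists>D'\<in>S. P D' D)"
  using assms
proof (induction S rule: finite_induct)
  case empty
  show ?case
    unfolding realizable_iff using representation_designated(3,4)[OF rep] by (auto intro!: exI[of _ zero])
next
  case (insert D' S)
  from realizable_disj[OF insert.prems[of D'] insert.IH] insert.prems show ?case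
    by simp
qed

lemma admits_pairwise_conditional_imp_N1:
  assumes min: "minimal_representation one zero R L"
  shows "N1 L"
  unfolding N1_iff_distinct_antichain
proof (intro conjI ballI impI)
  show "distinct L"
    using min by (rule minimal_representation_distinct)
  fix p q assume p: "p \<in> set L" and q: "q \<in> set L" and "p \<noteq> q"
  have negation: "\<exists>n. (n \<in> fst p \<longleftrightarrow> y \<notin> snd p) \<and> (n \<in> snd p \<longleftrightarrow> y \<notin> fst p) \<and>
      (n \<in> fst q \<longleftrightarrow> y \<notin> snd q) \<and> (n \<in> snd q \<longleftrightarrow> y \<notin> fst q)" for y
    using exists_pairwise_negation[of y] p q by metis
  show "\<not> fst p \<subseteq> fst q"
  proof
    assume "fst p \<subseteq> fst q"
    then obtain y where "y \<in> snd q" "y \<notin> snd p"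
      using minimal_representation_antichain[OF min p q] \<open>p \<noteq> q\<close> by blast
    then show False
      using negation[of y] \<open>fst p \<subseteq> fst q\<close> by blast
  qed
  show "\<not> snd p \<subseteq> snd q"
  proof
    assume "snd p \<subseteq> snd q"
    then obtain y where "y \<in> fst q" "y \<notin> fst p"
      using minimal_representation_antichain[OF min q p] \<open>p \<noteq> q\<close> by blast
    then show False
      using negation[of y] \<open>snd p \<subseteq> snd q\<close> by blast
  qed
qed

lemma admits_pairwise_conditional_imp_N2: "N2 L"
  unfolding N2_iff
proof (intro ballI conjI impI subsetI)
  fix p q y assume p: "p \<in> set L" and q: "q \<in> set L"
  obtain n where
    n: "\<And>p. p \<in> set L \<Longrightarrow> n \<in> fst p \<longleftrightarrow> y \<notin> snd p"
       "\<And>p. p \<in> set L \<Longrightarrow> n \<in> snd p \<longleftrightarrow> y \<notin> fst p"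
    using exists_pairwise_negation[of y] by blast
  show "y \<in> snd p" if "fst p \<subseteq> snd q" "y \<in> fst q"
    using that n[OF p] n[OF q] by blast
  show "y \<in> fst q" if "snd q \<subseteq> fst p" "y \<in> snd p"
    using that n[OF p] n[OF q] by blast
qed

end

lemma admits_pairwise_conditional_imp_DC2:
  fixes L :: "('v::finite set \<times> 'v set) list"
  assumes "representation one zero R L" and "admits_pairwise_conditional L"
  shows "DC2 L"
  unfolding DC2_def
proof (intro allI impI)
  fix S assume "S \<noteq> {} \<and> S \<subseteq> set (flat_list L)"
  then have "finite S"
    using finite_subset by blast
  then have "realizable L (\<lambda>D. \<exists>D'\<in>S. D' \<subseteq> D)"
    by (rule realizable_Bex[OF assms]) (simp add: realizable_subset[OF assms])
  then show "\<exists>x. \<forall>D\<in>set (flat_list L). x \<in> D \<longleftrightarrow> (\<exists>D'\<in>S. D' \<subseteq> D)"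
    unfolding realizable_def .
qed

lemma DC2_imp_DC1:
  assumes "DC2 L"
  shows "DC1 L"
  unfolding DC1_def
proof (intro ballI disjCI)
  fix D assume D: "D \<in> set (flat_list L)"
    and maximal: "\<not> (\<exists>D'\<in>set (flat_list L). D' \<noteq> D \<and> D \<subseteq> D')"
  have "{D} \<noteq> {} \<and> {D} \<subseteq> set (flat_list L)"
    using D by simp
  from assms[unfolded DC2_def, rule_format, OF this]
  obtain x where x: "\<forall>D'\<in>set (flat_list L). x \<in> D' \<longleftrightarrow> D \<subseteq> D'"
    by auto
  have "x \<in> D"
    using x D by blast
  moreover have "x \<notin> D'" if "D' \<in> set (flat_list L)" "D' \<noteq> D" for D'
    using x maximal that by blast
  ultimately show "\<exists>x\<in>D. \<forall>D'\<in>set (flat_list L). D' \<noteq> D \<longrightarrow> x \<notin> D'"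
    by blast
qed

(* the components that must contain the value of a -> b *)
definition conditional_components :: "('v set \<times> 'v set) list \<Rightarrow> 'v \<Rightarrow> 'v \<Rightarrow> 'v set set" where
  "conditional_components L a b =
     {fst q |q. q \<in> set L \<and> (a \<notin> snd q \<or> b \<in> fst q)} \<union> {snd q |q. q \<in> set L \<and> (a \<notin> fst q \<or> b \<in> snd q)}"

lemma conditional_components_subset: "conditional_components L a b \<subseteq> set (flat_list L)"
  unfolding conditional_components_def set_flat_list by blast

lemma conditional_components_upward_closed:
  assumes N1: "N1 L" and N2: "N2 L" and p: "p \<in> set L" and D: "D \<in> conditional_components L a b"
  shows "(D \<subseteq> fst p \<longrightarrow> a \<notin> snd p \<or> b \<in> fst p) \<and> (D \<subseteq> snd p \<longrightarrow> a \<notin> fst p \<or> b \<in> snd p)"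
  using D unfolding conditional_components_def
proof (elim UnE CollectE exE conjE)
  fix q assume "D = fst q" "q \<in> set L" "a \<notin> snd q \<or> b \<in> fst q"
  then show ?thesis
    using N1_antichainD[OF N1 \<open>q \<in> set L\<close> p] N2D(1)[OF N2 \<open>q \<in> set L\<close> p] by auto
next
  fix q assume "D = snd q" "q \<in> set L" "a \<notin> fst q \<or> b \<in> snd q"
  then show ?thesis
    using N1_antichainD[OF N1 \<open>q \<in> set L\<close> p] N2D(2)[OF N2 p \<open>q \<in> set L\<close>] by auto
qed

lemma pairwise_conditional_if_realizes_conditional_components:
  assumes N1: "N1 L" and N2: "N2 L"
    and c: "\<forall>D\<in>set (flat_list L). c \<in> D \<longleftrightarrow> (\<exists>D'\<in>conditional_components L a b. D' \<subseteq> D)"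
  shows "pairwise_conditional L a b c"
  unfolding pairwise_conditional_def
proof
  fix p assume p: "p \<in> set L"
  note closed = conditional_components_upward_closed[OF N1 N2 p]
  have "c \<in> fst p \<longleftrightarrow> (\<exists>D\<in>conditional_components L a b. D \<subseteq> fst p)"
    and "c \<in> snd p \<longleftrightarrow> (\<exists>D\<in>conditional_components L a b. D \<subseteq> snd p)"
    using c[unfolded ball_flat_list, rule_format, OF p] by simp_all
  moreover have "(\<exists>D\<in>conditional_components L a b. D \<subseteq> fst p) \<longleftrightarrow> a \<notin> snd p \<or> b \<in> fst p"
  proof
    assume "a \<notin> snd p \<or> b \<in> fst p"
    then have "fst p \<in> conditional_components L a b"
      unfolding conditional_components_def using p by blast
    then show "\<exists>D\<in>conditional_components L a b. D \<subseteq> fst p" by blast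
  qed (use closed[THEN conjunct1, rule_format] in blast)
  moreover have "(\<exists>D\<in>conditional_components L a b. D \<subseteq> snd p) \<longleftrightarrow> a \<notin> fst p \<or> b \<in> snd p"
  proof
    assume "a \<notin> fst p \<or> b \<in> snd p"
    then have "snd p \<in> conditional_components L a b"
      unfolding conditional_components_def using p by blast
    then show "\<exists>D\<in>conditional_components L a b. D \<subseteq> snd p" by blast
  qed (use closed[THEN conjunct2, rule_format] in blast)
  ultimately show "(c \<in> fst p \<longleftrightarrow> a \<notin> snd p \<or> b \<in> fst p) \<and> (c \<in> snd p \<longleftrightarrow> a \<notin> fst p \<or> b \<in> snd p)"
    by blast
qed

lemma conditions_imp_admits_pairwise_conditional:
  assumes rep: "representation one zero R L" and DC2: "DC2 L" and N1: "N1 L" and N2: "N2 L"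
  shows "admits_pairwise_conditional L"
  unfolding admits_pairwise_conditional_def
proof (intro allI)
  fix a b
  obtain c where
    "\<forall>D\<in>set (flat_list L). c \<in> D \<longleftrightarrow> (\<exists>D'\<in>conditional_components L a b. D' \<subseteq> D)"
  proof (cases "conditional_components L a b = {}")
    case True
    have "\<forall>D\<in>set (flat_list L). zero \<notin> D"
      using representation_designated(3,4)[OF rep] unfolding ball_flat_list by simp
    with True show thesis
      by (intro that) simp
  next
    case False
    with conditional_components_subset DC2 show thesis
      unfolding DC2_def by (meson that)
  qed
  then have "pairwise_conditional L a b c"
    by (rule pairwise_conditional_if_realizes_conditional_components[OF N1 N2])
  then show "\<exists>c. pairwise_conditional L a b c" ..
qed

lemma admits_pairwise_conditional_iff_conditions:
  fixes L :: "('v::finite set \<times> 'v set) list"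
  assumes min: "minimal_representation one zero R L"
  shows "admits_pairwise_conditional L \<longleftrightarrow> DC1 L \<and> DC2 L \<and> N1 L \<and> N2 L"
proof -
  have rep: "representation one zero R L"
    using min by (rule minimal_representation_imp_representation)
  show ?thesis
    using admits_pairwise_conditional_imp_DC2[OF rep] DC2_imp_DC1
      admits_pairwise_conditional_imp_N1[OF rep _ min] admits_pairwise_conditional_imp_N2[OF rep]
      conditions_imp_admits_pairwise_conditional[OF rep]
    by blast
qed

theorem theorem7p9:
  fixes R :: "('v::finite) set \<Rightarrow> 'v set \<Rightarrow> bool"
    and I :: "'c \<Rightarrow> 'v list \<Rightarrow> 'v"
    and one zero :: 'v
  assumes "one \<noteq> zero"
    and "intersective_mixed one zero R"
    and "constant_expressive I"
  shows "admits_G_conditional R I \<longleftrightarrow>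
    (\<forall>L. minimal_representation one zero R L \<longrightarrow> DC1 L \<and> DC2 L \<and> N1 L \<and> N2 L)"
proof -
  have "admits_G_conditional R I \<longleftrightarrow> DC1 L \<and> DC2 L \<and> N1 L \<and> N2 L"
    if "minimal_representation one zero R L" for L
    using admits_G_conditional_iff_admits_pairwise_conditional[OF assms(3) that]
      admits_pairwise_conditional_iff_conditions[OF that] by simp
  moreover obtain L where "minimal_representation one zero R L"
    using intersective_mixed_imp_ex_minimal_representation[OF assms(2)] by blast
  ultimately show ?thesis
    by blast
qed

end
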